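(* Let $F$ be a positive integer. The directed graph $\mathrm{G}^K(\mathcal{I}(F))$ is a tree with root $\hat x\in\{0,1\}^F$, the vector whose first $\lceil\frac{F+1}{2}\rceil-1$ entries are $1$, next $F-\lceil\frac{F+1}{2}\rceil$ entries are $0$, and last entry is $1$. Moreover, if $x=\mathcal{K}(S,F+1)$ for some $S\in\mathcal{I}(F)$, then the children of $x$ in $\mathrm{G}^K(\mathcal{I}(F))$ are exactly the vectors $x+\mathrm{e}_n-\mathrm{e}_{F-n}$ where $n\in\{1,\dots,F\}$ ranges over the indices satisfying: (1) $x_n=0$; (2) $x_k+x_j\ge 1$ for all positive integers $k,j$ with $k+j=n$; (3) $\frac F2<n<F$; (4) $x_{2n-F}=1$; (5) $3n\neq 2F$; (6) $4n\neq 3F$; (7) $n>F-m_x$, where $m_x=\min\{j: x_j=0\}$ if some $x_j=0$ and $m_x=F+1$ otherwise.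
   Context: A numerical semigroup is a subset $S\subseteq\mathbb{N}$ closed under addition, containing $0$, with $\mathbb{N}\setminus S$ finite; its Frobenius number is the largest integer not in $S$; its multiplicity $\mathrm{m}(S)$ is its smallest positive element. A numerical semigroup is irreducible if it cannot be written as the intersection of two numerical semigroups properly containing it; $\mathcal{I}(F)$ is the set of irreducible numerical semigroups with Frobenius number $F$. For $n\in S\setminus\{0\}$ and $i=1,\dots,n-1$, let $w_i$ be the least element of $S$ congruent to $i$ modulo $n$; the Kunz-coordinates vector of $S$ with respect to $n$ is $\mathcal{K}(S,n)=(x_1,\dots,x_{n-1})$ with $x_i=\frac{w_i-i}{n}$. For $S$ with Frobenius number $F$, $\mathcal{K}(S,F+1)\in\{0,1\}^F$ and $x_i=1$ iff $i\notin S$. $\mathrm{e}_i\in\mathbb{Z}^F$ is the $i$th unit vector. The directed graph $\mathrm{G}^K(\mathcal{I}(F))$ has vertex set $\{\mathcal{K}(S,F+1): S\in\mathcal{I}(F)\}$, and $(x,y)$ is an edge iff $m=\min\{i: x_i=0\}$ exists, $m<\frac F2$, and $y=x+\mathrm{e}_m-\mathrm{e}_{F-m}$. A directed graph is a tree with root $r$ if for every vertex $v\ne r$ there is a unique path of distinct edges from $v$ to $r$; if $(v,w)$ is an edge, $v$ is a child of $w$. *)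

theory Defs
  imports Complex_Main
begin

definition numerical_semigroup :: "nat set \<Rightarrow> bool" where
  "numerical_semigroup S \<longleftrightarrow>
     0 \<in> S \<and> (\<forall>a\<in>S. \<forall>b\<in>S. a + b \<in> S) \<and> finite (UNIV - S)"

definition frobenius :: "nat set \<Rightarrow> int" where
  "frobenius S = (if S = UNIV then -1 else int (Max (UNIV - S)))"

definition irreducible_ns :: "nat set \<Rightarrow> bool" where
  "irreducible_ns S \<longleftrightarrow> numerical_semigroup S \<and>
     \<not> (\<exists>T1 T2. numerical_semigroup T1 \<and> numerical_semigroup T2 \<and>
                S \<subset> T1 \<and> S \<subset> T2 \<and> S = T1 \<inter> T2)"

definition Irr :: "nat \<Rightarrow> nat set set" where
  "Irr F = {S. irreducible_ns S \<and> frobenius S = int F}"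

definition apery_w :: "nat set \<Rightarrow> nat \<Rightarrow> nat \<Rightarrow> nat" where
  "apery_w S n i = (LEAST w. w \<in> S \<and> w mod n = i mod n)"

text \<open>Vectors in Z^(n-1) are represented as functions nat => int, indexed by 1..n-1
  and equal to 0 outside this range.\<close>
definition kunz :: "nat set \<Rightarrow> nat \<Rightarrow> (nat \<Rightarrow> int)" where
  "kunz S n = (\<lambda>i. if 1 \<le> i \<and> i < n then int ((apery_w S n i - i) div n) else 0)"

definition unitv :: "nat \<Rightarrow> (nat \<Rightarrow> int)" where
  "unitv i = (\<lambda>j. if j = i then 1 else 0)"

definition vmove :: "(nat \<Rightarrow> int) \<Rightarrow> nat \<Rightarrow> nat \<Rightarrow> (nat \<Rightarrow> int)" where
  "vmove x a b = (\<lambda>j. x j + unitv a j - unitv b j)"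

definition GK_vertices :: "nat \<Rightarrow> (nat \<Rightarrow> int) set" where
  "GK_vertices F = (\<lambda>S. kunz S (F + 1)) ` Irr F"

definition GK_edges :: "nat \<Rightarrow> ((nat \<Rightarrow> int) \<times> (nat \<Rightarrow> int)) set" where
  "GK_edges F = {(x, y). x \<in> GK_vertices F \<and> y \<in> GK_vertices F \<and>
      (\<exists>i\<in>{1..F}. x i = 0) \<and>
      (let m = (LEAST i. i \<in> {1..F} \<and> x i = 0) in
         real m < real F / 2 \<and> y = vmove x m (F - m))}"

definition is_path :: "('a \<times> 'a) set \<Rightarrow> 'a \<Rightarrow> 'a \<Rightarrow> 'a list \<Rightarrow> bool" where
  "is_path E v r p \<longleftrightarrow> p \<noteq> [] \<and> hd p = v \<and> last p = r \<and>
     set (zip p (tl p)) \<subseteq> E \<and> distinct (zip p (tl p))"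

definition is_tree_with_root :: "'a set \<Rightarrow> ('a \<times> 'a) set \<Rightarrow> 'a \<Rightarrow> bool" where
  "is_tree_with_root V E r \<longleftrightarrow> r \<in> V \<and>
     (\<forall>v\<in>V. v \<noteq> r \<longrightarrow> (\<exists>!p. is_path E v r p))"

definition xhat :: "nat \<Rightarrow> (nat \<Rightarrow> int)" where
  "xhat F = (let c = nat \<lceil>real (F + 1) / 2\<rceil> in
     (\<lambda>i. if (1 \<le> i \<and> i \<le> c - 1) \<or> i = F then 1 else 0))"

definition mx :: "nat \<Rightarrow> (nat \<Rightarrow> int) \<Rightarrow> nat" where
  "mx F x = (if \<exists>j\<in>{1..F}. x j = 0 then (LEAST j. j \<in> {1..F} \<and> x j = 0) else F + 1)"

end

theory Submission
  imports Defs
begin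

text \<open>
  With respect to \<open>F + 1\<close>, the Kunz coordinates of a semigroup \<open>S\<close> with
  Frobenius number \<open>F\<close> are the indicator vector of its gaps, and \<open>S \<in> \<I>(F)\<close> iff every gap
  \<open>h \<notin> {F, F/2}\<close> has its partner \<open>F - h\<close> in \<open>S\<close>. An edge of \<open>G\<^sup>K(\<I>(F))\<close> leaving \<open>S\<close>
  exchanges the multiplicity \<open>m < F/2\<close> of \<open>S\<close> for the gap \<open>F - m\<close>; the result is again
  irreducible and has larger multiplicity. The only semigroup with \<open>2m \<ge> F\<close> is the root
  \<open>{0} \<union> {i \<ge> \<lceil>(F+1)/2\<rceil>, i \<noteq> F}\<close>, so the multiplicity is a bounded rank that increases
  along the unique outgoing edges, which makes the graph a tree. The children of \<open>S\<close> are
  the exchanges of an element \<open>n\<close> for \<open>F - n\<close> that produce an irreducible semigroup of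
  multiplicity \<open>F - n\<close>; conditions (1)--(7) characterize exactly these \<open>n\<close>.
\<close>

section \<open>A criterion for rooted trees\<close>

lemma is_path_Cons2:
  "is_path E v r (a # b # p) \<longleftrightarrow>
     a = v \<and> (v, b) \<in> E \<and> is_path E b r (b # p) \<and> (v, b) \<notin> set (zip (b # p) p)"
  by (auto simp: is_path_def)

lemma is_path_single: "is_path E v r [a] \<longleftrightarrow> a = v \<and> v = r"
  by (auto simp: is_path_def)

text \<open>If every vertex has at most one outgoing edge and the root has none, paths to the
  root are unique: they can only follow the outgoing edges.\<close>
lemma path_unique:
  assumes functional: "\<And>a b c. (a, b) \<in> E \<Longrightarrow> (a, c) \<in> E \<Longrightarrow> b = c"
    and root_sink: "\<And>b. (r, b) \<notin> E"
  shows "is_path E v r p \<Longrightarrow> is_path E v r q \<Longrightarrow> p = q"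
proof (induction p arbitrary: v q rule: induct_list012)
  case 1
  then show ?case by (simp add: is_path_def)
next
  case (2 a)
  then have "a = v" "v = r" by (simp_all add: is_path_single)
  with "2.prems"(2) root_sink show ?case
    by (cases q rule: remdups_adj.cases) (auto simp: is_path_def is_path_Cons2)
next
  case (3 a b p)
  then have vb: "(v, b) \<in> E" and path_b: "is_path E b r (b # p)" and av: "a = v"
    by (simp_all add: is_path_Cons2)
  then have "v \<noteq> r" using root_sink by blast
  with "3.prems"(2) obtain d q' where q: "q = v # d # q'" "(v, d) \<in> E" "is_path E d r (d # q')"
    by (cases q rule: remdups_adj.cases) (auto simp: is_path_def is_path_Cons2)
  have "b = d" using functional vb q(2) .
  then have "b # p = d # q'" using "3.IH"(2) path_b q(3) by blast
  then show ?case using q(1) av by simp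
qed

text \<open>If a bounded rank strictly increases along edges and every vertex other than the
  root has an outgoing edge, following outgoing edges reaches the root; the rank bound also
  makes the walk repetition-free.\<close>
lemma path_exists:
  assumes edges: "E \<subseteq> V \<times> V"
    and rank_increases: "\<And>a b. (a, b) \<in> E \<Longrightarrow> f a < (f b :: nat)"
    and rank_bounded: "\<And>a. a \<in> V \<Longrightarrow> f a \<le> B"
    and out_edge: "\<And>v. v \<in> V \<Longrightarrow> v \<noteq> r \<Longrightarrow> \<exists>w. (v, w) \<in> E"
  shows "v \<in> V \<Longrightarrow> \<exists>p. is_path E v r p \<and> (\<forall>u\<in>set p. f v \<le> f u)"
proof (induction "B - f v" arbitrary: v rule: less_induct)
  case less
  show ?case
  proof (cases "v = r")
    case True
    then show ?thesis by (intro exI[of _ "[r]"]) (simp add: is_path_def)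
  next
    case False
    then obtain w where vw: "(v, w) \<in> E" using out_edge less.prems by blast
    then have "w \<in> V" and rank_vw: "f v < f w" using edges rank_increases by auto
    then have "B - f w < B - f v" using rank_bounded[of w] by simp
    then obtain p where p: "is_path E w r p" and p_rank: "\<forall>u\<in>set p. f w \<le> f u"
      using less.hyps \<open>w \<in> V\<close> by blast
    then obtain p' where p': "p = w # p'" by (cases p) (auto simp: is_path_def)
    have "v \<notin> set p" using p_rank rank_vw by fastforce
    then have "(v, w) \<notin> set (zip p p')" by (auto dest: set_zip_leftD)
    then have "is_path E v r (v # p)" using p p' vw by (simp add: is_path_Cons2)
    moreover have "\<forall>u\<in>set (v # p). f v \<le> f u" using p_rank rank_vw by auto
    ultimately show ?thesis by blast
  qed
qed

lemma tree_by_rank: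
  assumes "r \<in> V" "E \<subseteq> V \<times> V"
    and "\<And>a b c. (a, b) \<in> E \<Longrightarrow> (a, c) \<in> E \<Longrightarrow> b = c"
    and "\<And>b. (r, b) \<notin> E"
    and "\<And>a b. (a, b) \<in> E \<Longrightarrow> f a < (f b :: nat)"
    and "\<And>a. a \<in> V \<Longrightarrow> f a \<le> B"
    and "\<And>v. v \<in> V \<Longrightarrow> v \<noteq> r \<Longrightarrow> \<exists>w. (v, w) \<in> E"
  shows "is_tree_with_root V E r"
  unfolding is_tree_with_root_def
proof (intro conjI ballI impI)
  fix v assume "v \<in> V" "v \<noteq> r"
  then obtain p where "is_path E v r p" using path_exists[of E V f B r v] assms by blast
  then show "\<exists>!p. is_path E v r p" using path_unique[of E r v] assms(3,4) by blast
qed (fact assms(1))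

text \<open>All edges of the graph, and the
  constructions in the characterization of irreducibility, are of this form.\<close>
definition exchange :: "nat set \<Rightarrow> nat \<Rightarrow> nat \<Rightarrow> nat set" where
  "exchange S d c = insert c (S - {d})"

lemma exchange_closed:
  assumes closed: "\<forall>a\<in>S. \<forall>b\<in>S. a + b \<in> S"
    and double: "c + c \<in> exchange S d c"
    and shift: "\<And>b. b \<in> S - {d} \<Longrightarrow> c + b \<in> exchange S d c"
    and no_split: "\<And>a b. a \<in> S - {d} \<Longrightarrow> b \<in> S - {d} \<Longrightarrow> a + b \<noteq> d"
  shows "\<forall>a\<in>exchange S d c. \<forall>b\<in>exchange S d c. a + b \<in> exchange S d c"
proof (intro ballI)
  fix a b assume "a \<in> exchange S d c" "b \<in> exchange S d c"
  then consider "a = c" "b = c" | "a = c" "b \<in> S - {d}" | "a \<in> S - {d}" "b = c"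
    | "a \<in> S - {d}" "b \<in> S - {d}"
    by (auto simp: exchange_def)
  then show "a + b \<in> exchange S d c"
  proof cases
    case 4
    then show ?thesis using closed no_split[of a b] by (auto simp: exchange_def)
  qed (use double shift[of b] shift[of a] in \<open>simp_all add: add.commute\<close>)
qed

section \<open>Irreducible numerical semigroups with Frobenius number \<open>F\<close>\<close>

text \<open>The combinatorial description of \<open>\<I>(F)\<close>: a submonoid of \<open>\<nat>\<close> containing every
  integer above \<open>F\<close>, not containing \<open>F\<close>, in which every gap \<open>h \<notin> {F, F/2}\<close> has its partner
  \<open>F - h\<close> in the semigroup (symmetric and pseudo-symmetric semigroups).\<close>
definition irr_semigroup :: "nat \<Rightarrow> nat set \<Rightarrow> bool" where
  "irr_semigroup F S \<longleftrightarrow> 0 \<in> S \<and> (\<forall>a\<in>S. \<forall>b\<in>S. a + b \<in> S) \<and> F \<notin> S \<and> (\<forall>i>F. i \<in> S) \<and>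
     (\<forall>h. h \<notin> S \<longrightarrow> h \<noteq> F \<longrightarrow> 2 * h \<noteq> F \<longrightarrow> F - h \<in> S)"

lemma gap_le: "\<forall>i>F. i \<in> S \<Longrightarrow> x \<notin> S \<Longrightarrow> x \<le> (F::nat)"
  using leI by blast

lemma numerical_semigroupI:
  assumes "0 \<in> S" "\<forall>a\<in>S. \<forall>b\<in>S. a + b \<in> S" "\<forall>i>F. i \<in> S"
  shows "numerical_semigroup S"
proof -
  have "UNIV - S \<subseteq> {..F}" using assms(3) gap_le by blast
  then have "finite (UNIV - S)" using finite_subset by blast
  then show ?thesis using assms by (simp add: numerical_semigroup_def)
qed

lemma frobenius_eq_iff:
  assumes "numerical_semigroup S"
  shows "frobenius S = int F \<longleftrightarrow> F \<notin> S \<and> (\<forall>i>F. i \<in> S)"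
proof (cases "S = UNIV")
  case False
  have fin: "finite (UNIV - S)" using assms by (simp add: numerical_semigroup_def)
  have "Max (UNIV - S) = F \<longleftrightarrow> F \<notin> S \<and> (\<forall>i>F. i \<in> S)"
  proof
    assume max: "Max (UNIV - S) = F"
    have "F \<notin> S" using Max_in[OF fin] False max by auto
    moreover have "i \<in> S" if "F < i" for i
      using Max_ge[OF fin, of i] max that by auto
    ultimately show "F \<notin> S \<and> (\<forall>i>F. i \<in> S)" by blast
  next
    assume "F \<notin> S \<and> (\<forall>i>F. i \<in> S)"
    then show "Max (UNIV - S) = F" by (intro Max_eqI) (use fin gap_le in auto)
  qed
  then show ?thesis using False by (simp add: frobenius_def)
qed (simp add: frobenius_def)

lemma irr_semigroup_numerical: "irr_semigroup F S \<Longrightarrow> numerical_semigroup S"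
  using numerical_semigroupI[of S F] by (simp add: irr_semigroup_def)

text \<open>Every numerical semigroup properly containing such an \<open>S\<close> contains \<open>F\<close> (it contains a
  gap \<open>h\<close>, and with it \<open>h + (F - h)\<close> or \<open>h + h\<close>); hence \<open>S\<close> is not the intersection of two
  of them.\<close>
lemma irr_semigroup_irreducible:
  assumes irr: "irr_semigroup F S"
  shows "irreducible_ns S"
proof -
  have F_in: "F \<in> T" if T: "numerical_semigroup T" "S \<subset> T" for T
  proof -
    obtain h where h: "h \<in> T" "h \<notin> S" using T(2) by blast
    have closed: "\<forall>a\<in>T. \<forall>b\<in>T. a + b \<in> T" using T(1) by (simp add: numerical_semigroup_def)
    consider "h = F" | "2 * h = F" | "F - h \<in> S" "h \<le> F"
      using irr h(2) gap_le unfolding irr_semigroup_def by blast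
    then show ?thesis
    proof cases
      case 2
      then show ?thesis using closed h(1) by (metis mult_2)
    next
      case 3
      then have "h + (F - h) \<in> T" using closed h(1) T(2) by blast
      then show ?thesis using 3 by simp
    qed (use h in simp)
  qed
  have "F \<notin> S" using irr by (simp add: irr_semigroup_def)
  then show ?thesis using irr_semigroup_numerical[OF irr] F_in
    unfolding irreducible_ns_def by blast
qed

lemma insert_frobenius_closed:
  fixes S :: "nat set"
  assumes closed: "\<forall>a\<in>S. \<forall>b\<in>S. a + b \<in> S" and "F \<notin> S" "\<forall>i>F. i \<in> S" "0 < F"
  shows "\<forall>a\<in>insert F S. \<forall>b\<in>insert F S. a + b \<in> insert F S"
proof -
  have "\<forall>a\<in>exchange S F F. \<forall>b\<in>exchange S F F. a + b \<in> exchange S F F"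
  proof (rule exchange_closed[OF closed])
    show "F + b \<in> exchange S F F" if "b \<in> S - {F}" for b
      using assms by (cases "b = 0") (auto simp: exchange_def)
    show "a + b \<noteq> F" if "a \<in> S - {F}" "b \<in> S - {F}" for a b
      using closed that \<open>F \<notin> S\<close> by blast
  qed (use assms in \<open>simp add: exchange_def\<close>)
  then show ?thesis by (simp add: exchange_def)
qed

lemma insert_maximal_gap_closed:
  fixes S :: "nat set"
  assumes closed: "\<forall>a\<in>S. \<forall>b\<in>S. a + b \<in> S" and above: "\<forall>i>F. i \<in> S"
    and h: "h \<notin> S" "F - h \<notin> S" "F < 2 * h"
    and larger: "\<And>k. h < k \<Longrightarrow> k \<notin> S \<Longrightarrow> k \<noteq> F \<Longrightarrow> F - k \<in> S"
  shows "\<forall>a\<in>insert h S. \<forall>b\<in>insert h S. a + b \<in> insert h S"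
proof -
  have "\<forall>a\<in>exchange S h h. \<forall>b\<in>exchange S h h. a + b \<in> exchange S h h"
  proof (rule exchange_closed[OF closed])
    show "h + h \<in> exchange S h h" using above h(3) by (simp add: exchange_def)
    show "h + b \<in> exchange S h h" if b: "b \<in> S - {h}" for b
    proof (cases "b = 0 \<or> F < h + b")
      case True
      then show ?thesis using above by (auto simp: exchange_def)
    next
      case False
      have "h + b \<noteq> F" using b h(2) by auto
      moreover have "F - (h + b) \<notin> S"
      proof
        assume "F - (h + b) \<in> S"
        then have "F - (h + b) + b \<in> S" using closed b by blast
        then show False using False h(2) by (simp add: add.commute)
      qed
      ultimately have "h + b \<in> S" using larger[of "h + b"] False by auto
      then show ?thesis by (simp add: exchange_def)
    qed
    show "a + b \<noteq> h" if "a \<in> S - {h}" "b \<in> S - {h}" for a b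
      using closed that h(1) by blast
  qed
  then show ?thesis using h(1) by (simp add: exchange_def)
qed

text \<open>An irreducible numerical semigroup with Frobenius number \<open>F\<close> has the gap symmetry
  of \<open>irr_semigroup\<close>: otherwise adjoining the largest asymmetric gap, respectively
  \<open>F\<close>, writes it as an intersection of two strictly larger numerical semigroups.\<close>
lemma irreducible_irr_semigroup:
  assumes irr: "irreducible_ns S" and frob: "F \<notin> S" "\<forall>i>F. i \<in> S" and "0 < F"
  shows "irr_semigroup F S"
proof -
  have ns: "numerical_semigroup S" using irr by (simp add: irreducible_ns_def)
  then have zero: "0 \<in> S" and closed: "\<forall>a\<in>S. \<forall>b\<in>S. a + b \<in> S"
    by (auto simp: numerical_semigroup_def)
  define B where "B = {h. h \<notin> S \<and> h \<noteq> F \<and> 2 * h \<noteq> F \<and> F - h \<notin> S}"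
  have "B = {}"
  proof (rule ccontr)
    assume "B \<noteq> {}"
    moreover have "finite B" using frob(2) gap_le finite_subset[of B "{..F}"] by (auto simp: B_def)
    ultimately obtain h where h: "h \<in> B" and h_max: "\<And>k. k \<in> B \<Longrightarrow> k \<le> h"
      using Max_in Max_ge by blast
    have "h \<le> F" "h \<noteq> F" using h gap_le[OF frob(2)] by (auto simp: B_def)
    moreover have "h \<noteq> 0" using h zero unfolding B_def by (intro notI) simp
    ultimately have "F - h \<in> B" using h by (auto simp: B_def)
    then have "F < 2 * h" using h h_max by (fastforce simp: B_def)
    have larger: "F - k \<in> S" if "h < k" "k \<notin> S" "k \<noteq> F" for k
      using h_max[of k] that \<open>F < 2 * h\<close> unfolding B_def by force
    have "numerical_semigroup (insert h S)" "numerical_semigroup (insert F S)"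
      using insert_maximal_gap_closed[OF closed frob(2) _ _ \<open>F < 2 * h\<close> larger]
        insert_frobenius_closed[OF closed frob \<open>0 < F\<close>] h zero frob(2)
      by (auto simp: B_def intro!: numerical_semigroupI[of _ F])
    moreover have "S = insert h S \<inter> insert F S" "S \<subset> insert h S" "S \<subset> insert F S"
      using h frob(1) unfolding B_def by auto
    ultimately show False using irr unfolding irreducible_ns_def by blast
  qed
  then show ?thesis using zero closed frob by (auto simp: irr_semigroup_def B_def)
qed

lemma Irr_iff_irr_semigroup: "0 < F \<Longrightarrow> S \<in> Irr F \<longleftrightarrow> irr_semigroup F S"
proof
  assume "0 < F" and "S \<in> Irr F"
  then show "irr_semigroup F S"
    using irreducible_irr_semigroup frobenius_eq_iff
    by (auto simp: Irr_def irreducible_ns_def)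
next
  assume "irr_semigroup F S"
  then show "S \<in> Irr F"
    using irr_semigroup_irreducible frobenius_eq_iff[OF irr_semigroup_numerical]
    by (auto simp: Irr_def irr_semigroup_def)
qed

section \<open>Kunz coordinates as gap vectors\<close>

definition gap_vector :: "nat \<Rightarrow> nat set \<Rightarrow> nat \<Rightarrow> int" where
  "gap_vector F S = (\<lambda>i. if 1 \<le> i \<and> i \<le> F then (if i \<in> S then 0 else 1) else 0)"

lemma congruent_above:
  fixes w i n :: nat
  assumes "w mod n = i" "w \<noteq> i"
  shows "i + n \<le> w"
proof -
  have w: "w = (w div n) * n + i" using assms(1) by (metis div_mult_mod_eq)
  then have "w div n \<noteq> 0" using assms(2) by (intro notI) simp
  then have "n \<le> (w div n) * n" by simp
  then show ?thesis using w by linarith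
qed

lemma apery_w_Frobenius:
  assumes above: "\<forall>j>F. j \<in> S" and "i \<le> F"
  shows "apery_w S (F + 1) i = (if i \<in> S then i else i + (F + 1))"
  unfolding apery_w_def
proof (rule Least_equality)
  have "(i + (F + 1)) mod (F + 1) = i mod (F + 1)" by (rule mod_add_self2)
  then show "(if i \<in> S then i else i + (F + 1)) \<in> S \<and>
      (if i \<in> S then i else i + (F + 1)) mod (F + 1) = i mod (F + 1)"
    using above by simp
next
  fix w assume w: "w \<in> S \<and> w mod (F + 1) = i mod (F + 1)"
  then have "w mod (F + 1) = i" using \<open>i \<le> F\<close> by simp
  then show "(if i \<in> S then i else i + (F + 1)) \<le> w"
    using congruent_above[of w "F + 1" i] w by (cases "w = i") auto
qed

lemma kunz_gap_vector:
  assumes "\<forall>j>F. j \<in> S"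
  shows "kunz S (F + 1) = gap_vector F S"
  using apery_w_Frobenius[OF assms] by (auto simp: kunz_def gap_vector_def)

lemma gap_vector_inj:
  assumes "0 \<in> A" "0 \<in> B" "\<forall>i>F. i \<in> A" "\<forall>i>F. i \<in> B" "gap_vector F A = gap_vector F B"
  shows "A = B"
proof (rule set_eqI)
  fix i
  show "i \<in> A \<longleftrightarrow> i \<in> B"
  proof (cases "1 \<le> i \<and> i \<le> F")
    case True
    then show ?thesis using fun_cong[OF assms(5), of i] by (auto simp: gap_vector_def split: if_splits)
  next
    case False
    then have "i = 0 \<or> i > F" by auto
    then show ?thesis using assms by auto
  qed
qed

lemma vmove_gap_vector:
  assumes "d \<in> S" "c \<notin> S" "1 \<le> d" "d \<le> F" "1 \<le> c" "c \<le> F"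
  shows "vmove (gap_vector F S) d c = gap_vector F (exchange S d c)"
  using assms by (intro ext) (auto simp: vmove_def unitv_def gap_vector_def exchange_def)

section \<open>Multiplicity and the root\<close>

definition multiplicity :: "nat set \<Rightarrow> nat" where
  "multiplicity S = (LEAST i. 0 < i \<and> i \<in> S)"

lemma multiplicity:
  assumes "\<forall>i>F. i \<in> S"
  shows multiplicity_pos: "0 < multiplicity S" and multiplicity_in: "multiplicity S \<in> S"
    and multiplicity_le: "multiplicity S \<le> F + 1"
proof -
  have witness: "0 < F + 1 \<and> F + 1 \<in> S" using assms by simp
  show "0 < multiplicity S" "multiplicity S \<in> S"
    using LeastI[of "\<lambda>i. 0 < i \<and> i \<in> S", OF witness] by (auto simp: multiplicity_def)
  show "multiplicity S \<le> F + 1"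
    using Least_le[of "\<lambda>i. 0 < i \<and> i \<in> S", OF witness] by (simp add: multiplicity_def)
qed

lemma multiplicity_min: "0 < i \<Longrightarrow> i \<in> S \<Longrightarrow> multiplicity S \<le> i"
  by (simp add: multiplicity_def Least_le)

lemma mx_gap_vector:
  assumes above: "\<forall>i>F. i \<in> S"
  shows "mx F (gap_vector F S) = multiplicity S"
proof -
  have zero_iff: "i \<in> {1..F} \<and> gap_vector F S i = 0 \<longleftrightarrow> 0 < i \<and> i \<in> S \<and> i \<le> F" for i
    by (auto simp: gap_vector_def)
  then have ex_iff: "(\<exists>j\<in>{1..F}. gap_vector F S j = 0) \<longleftrightarrow> (\<exists>i. 0 < i \<and> i \<in> S \<and> i \<le> F)"
    by blast
  show ?thesis
  proof (cases "multiplicity S \<le> F")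
    case True
    then have witness: "0 < multiplicity S \<and> multiplicity S \<in> S \<and> multiplicity S \<le> F"
      using multiplicity_pos[OF above] multiplicity_in[OF above] by blast
    have "(LEAST i. 0 < i \<and> i \<in> S \<and> i \<le> F) = multiplicity S"
      by (rule Least_equality) (use witness multiplicity_min in auto)
    then show ?thesis using witness unfolding mx_def ex_iff zero_iff by auto
  next
    case False
    then have "\<not> (0 < i \<and> i \<in> S \<and> i \<le> F)" for i
      using multiplicity_min[of i S] by linarith
    then show ?thesis using False multiplicity_le[OF above] unfolding mx_def ex_iff zero_iff by auto
  qed
qed

lemma mx_le: "mx F x \<le> F + 1"
proof (cases "\<exists>j\<in>{1..F}. x j = 0")
  case True
  then obtain j where j: "j \<in> {1..F}" "x j = 0" by blast
  then have "(LEAST i. i \<in> {1..F} \<and> x i = 0) \<le> j" by (simp add: Least_le)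
  then show ?thesis using True j by (simp add: mx_def)
qed (simp add: mx_def)

definition root_semigroup :: "nat \<Rightarrow> nat set" where
  "root_semigroup F = {i. i = 0 \<or> ((F + 2) div 2 \<le> i \<and> i \<noteq> F)}"

lemma ceiling_half: "nat \<lceil>real (F + 1) / 2\<rceil> = (F + 2) div 2"
proof -
  have "\<lceil>real (F + 1) / 2\<rceil> = int ((F + 2) div 2)" by (rule ceiling_unique) auto
  then show ?thesis by simp
qed

lemma xhat_gap_vector: "0 < F \<Longrightarrow> xhat F = gap_vector F (root_semigroup F)"
  unfolding xhat_def ceiling_half Let_def gap_vector_def root_semigroup_def by (intro ext) auto

lemma root_irr_semigroup:
  assumes "0 < F"
  shows "irr_semigroup F (root_semigroup F)"
proof -
  define c where "c = (F + 2) div 2"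
  have root: "root_semigroup F = {i. i = 0 \<or> (c \<le> i \<and> i \<noteq> F)}"
    by (simp add: root_semigroup_def c_def)
  have "F + 1 \<le> 2 * c" "2 * c \<le> F + 2" by (simp_all add: c_def)
  then show ?thesis using assms unfolding irr_semigroup_def root by auto
qed

lemma root_semigroup_unique:
  assumes irr: "irr_semigroup F S" and large: "\<not> 2 * multiplicity S < F"
  shows "S = root_semigroup F"
proof -
  have above: "\<forall>i>F. i \<in> S" and zero: "0 \<in> S" and closed: "\<forall>a\<in>S. \<forall>b\<in>S. a + b \<in> S"
    and F_gap: "F \<notin> S" and symmetric: "\<forall>h. h \<notin> S \<longrightarrow> h \<noteq> F \<longrightarrow> 2 * h \<noteq> F \<longrightarrow> F - h \<in> S"
    using irr by (auto simp: irr_semigroup_def)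
  define m where "m = multiplicity S"
  define c where "c = (F + 2) div 2"
  have "m + m \<in> S" using closed multiplicity_in[OF above] m_def by blast
  then have "F < 2 * m" using large F_gap m_def by (cases "2 * m = F") (auto simp: mult_2)
  then have "c \<le> m" by (simp add: c_def)
  have small_gaps: "i \<notin> S" if "0 < i" "i < c" for i
    using multiplicity_min[of i S] that \<open>c \<le> m\<close> m_def by linarith
  have large_elements: "i \<in> S" if "c \<le> i" "i \<noteq> F" for i
  proof (rule ccontr)
    assume gap: "i \<notin> S"
    moreover have "2 * i \<noteq> F" using that c_def by linarith
    ultimately have "F - i \<in> S" using symmetric that by blast
    moreover have "i < F" using gap_le[OF above gap] that by simp
    ultimately have "m \<le> F - i" using multiplicity_min m_def by simp
    then show False using \<open>c \<le> m\<close> that c_def by linarith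
  qed
  show ?thesis
    unfolding root_semigroup_def c_def[symmetric]
    using zero F_gap small_gaps large_elements not_less by blast
qed

section \<open>Moving to the parent and to the children\<close>

lemma partner_gap:
  assumes "irr_semigroup F S" "d \<in> S" "d \<le> F"
  shows "F - d \<notin> S"
proof
  assume "F - d \<in> S"
  then have "d + (F - d) \<in> S" using assms(1,2) unfolding irr_semigroup_def by blast
  then have "F \<in> S" using \<open>d \<le> F\<close> by simp
  then show False using assms(1) by (simp add: irr_semigroup_def)
qed

lemma exchange_irr_semigroup:
  assumes irr: "irr_semigroup F S" and d: "0 < d" "d < F"
    and closed: "\<forall>a\<in>exchange S d (F - d). \<forall>b\<in>exchange S d (F - d). a + b \<in> exchange S d (F - d)"
  shows "irr_semigroup F (exchange S d (F - d))"
proof -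
  have above: "\<forall>i>F. i \<in> S" and zero: "0 \<in> S" and F_gap: "F \<notin> S"
    and symmetric: "\<forall>h. h \<notin> S \<longrightarrow> h \<noteq> F \<longrightarrow> 2 * h \<noteq> F \<longrightarrow> F - h \<in> S"
    using irr by (auto simp: irr_semigroup_def)
  have "F - h \<in> exchange S d (F - d)"
    if h: "h \<notin> exchange S d (F - d)" "h \<noteq> F" "2 * h \<noteq> F" for h
  proof (cases "h = d")
    case False
    then have "h \<notin> S" "h \<noteq> F - d" using h by (auto simp: exchange_def)
    moreover have "h \<le> F" using gap_le[OF above \<open>h \<notin> S\<close>] .
    ultimately show ?thesis using symmetric h by (auto simp: exchange_def)
  qed (simp add: exchange_def)
  then show ?thesis
    using zero F_gap above closed d unfolding irr_semigroup_def exchange_def by auto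
qed

lemma parent_exchange:
  assumes irr: "irr_semigroup F S" and small: "2 * multiplicity S < F"
  defines "m \<equiv> multiplicity S"
  shows "irr_semigroup F (exchange S m (F - m)) \<and> m < multiplicity (exchange S m (F - m))"
proof -
  have above: "\<forall>i>F. i \<in> S" and closed: "\<forall>a\<in>S. \<forall>b\<in>S. a + b \<in> S"
    using irr by (auto simp: irr_semigroup_def)
  have "0 < m" using multiplicity_pos[OF above] m_def by simp
  have zero_or_large: "b = 0 \<or> m < b" if "b \<in> S - {m}" for b
    using multiplicity_min[of b S] that m_def by fastforce
  have "\<forall>a\<in>exchange S m (F - m). \<forall>b\<in>exchange S m (F - m). a + b \<in> exchange S m (F - m)"
  proof (rule exchange_closed[OF closed])
    show "F - m + (F - m) \<in> exchange S m (F - m)"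
      using above small m_def by (auto simp: exchange_def)
    show "F - m + b \<in> exchange S m (F - m)" if "b \<in> S - {m}" for b
      using zero_or_large[OF that] above small m_def by (auto simp: exchange_def)
    show "a + b \<noteq> m" if "a \<in> S - {m}" "b \<in> S - {m}" for a b
      using zero_or_large[OF that(1)] zero_or_large[OF that(2)] that by auto
  qed
  then have irr': "irr_semigroup F (exchange S m (F - m))"
    using exchange_irr_semigroup[OF irr \<open>0 < m\<close>] small m_def by simp
  then have above': "\<forall>i>F. i \<in> exchange S m (F - m)" by (simp add: irr_semigroup_def)
  have "multiplicity (exchange S m (F - m)) \<in> exchange S m (F - m)"
    "0 < multiplicity (exchange S m (F - m))"
    using multiplicity_in[OF above'] multiplicity_pos[OF above'] by auto
  then have "m < multiplicity (exchange S m (F - m))"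
    using zero_or_large small m_def by (fastforce simp: exchange_def)
  then show ?thesis using irr' by simp
qed

text \<open>The set-theoretic form of conditions (1)--(7) on an index \<open>n\<close>: the element \<open>n\<close> may be
  exchanged for the gap \<open>F - n\<close>, producing a child of \<open>S\<close>.\<close>
definition child_index :: "nat \<Rightarrow> nat set \<Rightarrow> nat \<Rightarrow> bool" where
  "child_index F S n \<longleftrightarrow> n \<in> S \<and> F < 2 * n \<and> n < F \<and>
     (\<forall>k j. 0 < k \<longrightarrow> 0 < j \<longrightarrow> k + j = n \<longrightarrow> k \<notin> S \<or> j \<notin> S) \<and>
     2 * n - F \<notin> S \<and> 3 * n \<noteq> 2 * F \<and> 4 * n \<noteq> 3 * F \<and> F - n < multiplicity S"

text \<open>At a child index \<open>n\<close> the exchange of \<open>n\<close> for \<open>m = F - n\<close> is closed under addition: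
  conditions (2)--(7) rule out exactly the sums that could leave the new set.\<close>
lemma child_exchange_closed:
  assumes irr: "irr_semigroup F S" and child: "child_index F S n"
  defines "m \<equiv> F - n"
  shows "\<forall>a\<in>exchange S n m. \<forall>b\<in>exchange S n m. a + b \<in> exchange S n m"
proof -
  have above: "\<forall>i>F. i \<in> S" and closed: "\<forall>a\<in>S. \<forall>b\<in>S. a + b \<in> S"
    and symmetric: "\<forall>h. h \<notin> S \<longrightarrow> h \<noteq> F \<longrightarrow> 2 * h \<noteq> F \<longrightarrow> F - h \<in> S"
    using irr by (auto simp: irr_semigroup_def)
  have n: "n \<in> S" "F < 2 * n" "n < F" "2 * n - F \<notin> S" "3 * n \<noteq> 2 * F" "4 * n \<noteq> 3 * F"
    and unsplit: "\<And>k j. 0 < k \<Longrightarrow> 0 < j \<Longrightarrow> k + j = n \<Longrightarrow> k \<in> S \<Longrightarrow> j \<in> S \<Longrightarrow> False"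
    using child unfolding child_index_def by blast+
  have large: "m < b" if "0 < b" "b \<in> S" for b
    using child multiplicity_min[OF that] unfolding child_index_def m_def by linarith
  have nm: "m + n = F" "2 * n - F = n - m" using n m_def by auto
  show ?thesis
  proof (rule exchange_closed[OF closed])
    have "m + m \<in> S"
    proof (rule ccontr)
      assume "m + m \<notin> S"
      moreover have "m + m \<noteq> F" "2 * (m + m) \<noteq> F" using n nm by auto
      ultimately have "F - (m + m) \<in> S" using symmetric by blast
      moreover have "F - (m + m) = 2 * n - F" using nm by linarith
      ultimately show False using n(4) by simp
    qed
    moreover have "m + m \<noteq> n" using n nm by auto
    ultimately show "m + m \<in> exchange S n m" by (simp add: exchange_def)
  next
    fix b assume b: "b \<in> S - {n}"
    show "m + b \<in> exchange S n m"
    proof (cases "b = 0 \<or> F < m + b")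
      case True
      then show ?thesis using above n by (auto simp: exchange_def)
    next
      case False
      then have "0 < b" "m + b < F" using b nm by auto
      have "m + b \<in> S"
      proof (rule ccontr)
        assume gap: "m + b \<notin> S"
        show False
        proof (cases "2 * (m + b) = F")
          case True
          then have "b + b = 2 * n - F" using nm by simp
          then show False using closed b n(4) by (metis DiffD1)
        next
          case False
          then have "F - (m + b) \<in> S" using symmetric gap \<open>m + b < F\<close> by simp
          moreover have "F - (m + b) + b = n" "0 < F - (m + b)" using \<open>m + b < F\<close> nm by auto
          ultimately show False using unsplit[of "F - (m + b)" b] b \<open>0 < b\<close> by auto
        qed
      qed
      moreover have "m + b \<noteq> n" using b n(4) nm by auto
      ultimately show ?thesis by (simp add: exchange_def)
    qed
  next
    fix a b assume "a \<in> S - {n}" "b \<in> S - {n}"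
    then show "a + b \<noteq> n" using unsplit[of a b] by (cases "a = 0 \<or> b = 0") auto
  qed
qed

lemma child_exchange:
  assumes irr: "irr_semigroup F S" and child: "child_index F S n"
  shows "irr_semigroup F (exchange S n (F - n)) \<and> multiplicity (exchange S n (F - n)) = F - n"
proof -
  have n: "0 < n" "n < F" "F - n < multiplicity S" using child by (auto simp: child_index_def)
  have "multiplicity (exchange S n (F - n)) = F - n"
    unfolding multiplicity_def
  proof (rule Least_equality)
    show "0 < F - n \<and> F - n \<in> exchange S n (F - n)" using n by (simp add: exchange_def)
    fix y assume "0 < y \<and> y \<in> exchange S n (F - n)"
    then show "F - n \<le> y"
      using n multiplicity_min[of y S] by (auto simp: exchange_def)
  qed
  then show ?thesis
    using exchange_irr_semigroup[OF irr n(1,2) child_exchange_closed[OF irr child]] by simp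
qed

lemma parent_child_index:
  assumes irr: "irr_semigroup F T" and small: "2 * multiplicity T < F"
  defines "m \<equiv> multiplicity T"
  shows "child_index F (exchange T m (F - m)) (F - m)"
proof -
  have above: "\<forall>i>F. i \<in> T" and closed: "\<forall>a\<in>T. \<forall>b\<in>T. a + b \<in> T"
    using irr by (auto simp: irr_semigroup_def)
  have m: "0 < m" "m \<in> T" "2 * m < F"
    using multiplicity_pos[OF above] multiplicity_in[OF above] small m_def by auto
  have n_gap: "F - m \<notin> T" using partner_gap[OF irr m(2)] m(3) by simp
  have in_T: "i \<in> T" if "i \<in> exchange T m (F - m)" "i \<noteq> F - m" for i
    using that by (simp add: exchange_def)
  have unsplit: "k \<notin> exchange T m (F - m) \<or> j \<notin> exchange T m (F - m)"
    if "0 < k" "0 < j" "k + j = F - m" for k j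
    using in_T[of k] in_T[of j] closed n_gap that by force
  have "2 * (F - m) - F \<notin> T"
  proof
    assume "2 * (F - m) - F \<in> T"
    then have "2 * (F - m) - F + m \<in> T" using closed m(2) by blast
    moreover have "2 * (F - m) - F + m = F - m" using m(3) by simp
    ultimately show False using n_gap by simp
  qed
  then have not_reflected: "2 * (F - m) - F \<notin> exchange T m (F - m)"
    using m by (auto simp: exchange_def)
  have "m + m \<in> T" "m + m + m \<in> T" using closed m(2) by blast+
  moreover have "3 * (F - m) = 2 * F \<Longrightarrow> F - m = m + m" "4 * (F - m) = 3 * F \<Longrightarrow> F - m = m + m + m"
    using m(3) by linarith+
  ultimately have not_multiple: "3 * (F - m) \<noteq> 2 * F" "4 * (F - m) \<noteq> 3 * F" using n_gap by auto
  moreover have "m < multiplicity (exchange T m (F - m))"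
    using parent_exchange[OF irr small] m_def by simp
  ultimately show ?thesis
    using unsplit m not_reflected not_multiple unfolding child_index_def by (auto simp: exchange_def)
qed

lemma exchange_inverse:
  assumes "d \<in> S" "F - d \<notin> S" "d \<le> F"
  shows "exchange (exchange S d (F - d)) (F - d) (F - (F - d)) = S"
  using assms by (auto simp: exchange_def)

section \<open>The graph \<open>G\<^sup>K(\<I>(F))\<close>\<close>

lemma GK_vertices_eq:
  assumes "0 < F"
  shows "GK_vertices F = gap_vector F ` {S. irr_semigroup F S}"
  unfolding GK_vertices_def
proof (rule image_cong)
  show "Irr F = {S. irr_semigroup F S}" using Irr_iff_irr_semigroup[OF assms] by blast
  show "kunz S (F + 1) = gap_vector F S" if "S \<in> {S. irr_semigroup F S}" for S
    using that kunz_gap_vector by (simp add: irr_semigroup_def)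
qed

lemma GK_edges_iff:
  "(x, y) \<in> GK_edges F \<longleftrightarrow> x \<in> GK_vertices F \<and> y \<in> GK_vertices F \<and>
     2 * mx F x < F \<and> y = vmove x (mx F x) (F - mx F x)"
proof (cases "\<exists>j\<in>{1..F}. x j = 0")
  case True
  moreover have "real m < real F / 2 \<longleftrightarrow> 2 * m < F" for m by linarith
  ultimately show ?thesis by (simp add: GK_edges_def mx_def Let_def)
qed (simp add: GK_edges_def mx_def)

lemma edge_iff:
  assumes F: "0 < F" and irr_S: "irr_semigroup F S" and irr_T: "irr_semigroup F T"
  shows "(gap_vector F S, gap_vector F T) \<in> GK_edges F \<longleftrightarrow>
    2 * multiplicity S < F \<and> T = exchange S (multiplicity S) (F - multiplicity S)"
proof -
  define m where "m = multiplicity S"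
  have above: "\<forall>i>F. i \<in> S" and zero: "0 \<in> S" using irr_S by (auto simp: irr_semigroup_def)
  have m: "0 < m" "m \<in> S" using multiplicity_pos[OF above] multiplicity_in[OF above] m_def by auto
  have "gap_vector F T = vmove (gap_vector F S) m (F - m) \<longleftrightarrow> T = exchange S m (F - m)"
    if small: "2 * m < F"
  proof -
    have "F - m \<notin> S" using partner_gap[OF irr_S m(2)] small by simp
    then have move: "vmove (gap_vector F S) m (F - m) = gap_vector F (exchange S m (F - m))"
      using vmove_gap_vector[OF m(2)] m small by simp
    have "0 \<in> exchange S m (F - m)" "\<forall>i>F. i \<in> exchange S m (F - m)"
      using zero above m small by (auto simp: exchange_def)
    then show ?thesis
      unfolding move using gap_vector_inj[of T _ F] irr_T by (auto simp: irr_semigroup_def)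
  qed
  moreover have "gap_vector F S \<in> GK_vertices F" "gap_vector F T \<in> GK_vertices F"
    using GK_vertices_eq[OF F] irr_S irr_T by auto
  ultimately show ?thesis
    unfolding GK_edges_iff mx_gap_vector[OF above] m_def by blast
qed

lemma root_no_parent:
  assumes "0 < F"
  shows "\<not> 2 * multiplicity (root_semigroup F) < F"
proof -
  have "\<forall>i>F. i \<in> root_semigroup F"
    using root_irr_semigroup[OF assms] by (simp add: irr_semigroup_def)
  then have "multiplicity (root_semigroup F) \<in> root_semigroup F" "0 < multiplicity (root_semigroup F)"
    using multiplicity_in multiplicity_pos by blast+
  then show ?thesis by (auto simp: root_semigroup_def)
qed

lemma GK_tree:
  assumes F: "0 < F"
  shows "is_tree_with_root (GK_vertices F) (GK_edges F) (xhat F)"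
proof (rule tree_by_rank[where f = "mx F" and B = "F + 1"])
  have vertex: "\<exists>S. irr_semigroup F S \<and> v = gap_vector F S" if "v \<in> GK_vertices F" for v
    using that GK_vertices_eq[OF F] by blast
  have mx_eq: "mx F (gap_vector F S) = multiplicity S" if "irr_semigroup F S" for S
    using that mx_gap_vector by (simp add: irr_semigroup_def)
  show "xhat F \<in> GK_vertices F"
    using xhat_gap_vector[OF F] root_irr_semigroup[OF F] GK_vertices_eq[OF F] by auto
  show "GK_edges F \<subseteq> GK_vertices F \<times> GK_vertices F" by (auto simp: GK_edges_iff)
  show "\<And>a b c. (a, b) \<in> GK_edges F \<Longrightarrow> (a, c) \<in> GK_edges F \<Longrightarrow> b = c"
    by (simp add: GK_edges_iff)
  show "(xhat F, b) \<notin> GK_edges F" for b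
    using root_no_parent[OF F] mx_eq[OF root_irr_semigroup[OF F]]
    by (simp add: GK_edges_iff xhat_gap_vector[OF F])
  show "mx F a < mx F b" if edge: "(a, b) \<in> GK_edges F" for a b
  proof -
    obtain S T where S: "irr_semigroup F S" "a = gap_vector F S"
      and T: "irr_semigroup F T" "b = gap_vector F T"
      using edge vertex unfolding GK_edges_iff by blast
    then have "2 * multiplicity S < F \<and> T = exchange S (multiplicity S) (F - multiplicity S)"
      using edge edge_iff[OF F] by simp
    then show ?thesis using parent_exchange[OF S(1)] mx_eq S T by auto
  qed
  show "mx F a \<le> F + 1" for a by (rule mx_le)
  show "\<exists>w. (v, w) \<in> GK_edges F" if v: "v \<in> GK_vertices F" "v \<noteq> xhat F" for v
  proof -
    obtain S where S: "irr_semigroup F S" "v = gap_vector F S" using vertex v(1) by blast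
    then have small: "2 * multiplicity S < F"
      using root_semigroup_unique[OF S(1)] v(2) xhat_gap_vector[OF F] by auto
    then have "(v, gap_vector F (exchange S (multiplicity S) (F - multiplicity S))) \<in> GK_edges F"
      using parent_exchange[OF S(1)] edge_iff[OF F S(1)] S(2) by simp
    then show ?thesis by blast
  qed
qed

lemma child_gap_vector:
  assumes "irr_semigroup F S" "child_index F S n"
  shows "vmove (gap_vector F S) n (F - n) = gap_vector F (exchange S n (F - n))"
proof -
  have "n \<in> S" "F < 2 * n" "n < F" using assms(2) by (auto simp: child_index_def)
  moreover have "F - n \<notin> S" using partner_gap[OF assms(1)] calculation by simp
  ultimately show ?thesis using vmove_gap_vector by simp
qed

lemma GK_children:
  assumes F: "0 < F" and irr: "irr_semigroup F S"
  shows "{v. (v, gap_vector F S) \<in> GK_edges F} =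
    {vmove (gap_vector F S) n (F - n) | n. child_index F S n}"
proof (intro set_eqI iffI; clarsimp)
  fix v assume edge: "(v, gap_vector F S) \<in> GK_edges F"
  then obtain T where T: "irr_semigroup F T" "v = gap_vector F T"
    using GK_vertices_eq[OF F] by (auto simp: GK_edges_iff)
  define m where "m = multiplicity T"
  have small: "2 * m < F" and S_eq: "S = exchange T m (F - m)"
    using edge edge_iff[OF F T(1) irr] T(2) m_def by auto
  have "m \<in> T" using multiplicity_in[of F T] T(1) m_def by (simp add: irr_semigroup_def)
  then have "T = exchange S (F - m) (F - (F - m))"
    using exchange_inverse[of m T F] partner_gap[OF T(1)] S_eq small by simp
  moreover have "child_index F S (F - m)"
    using parent_child_index[OF T(1)] small S_eq m_def by simp
  ultimately show "\<exists>n. v = vmove (gap_vector F S) n (F - n) \<and> child_index F S n"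
    using child_gap_vector[OF irr, of "F - m"] T(2) by metis
next
  fix n assume child: "child_index F S n"
  define T where "T = exchange S n (F - n)"
  have T: "irr_semigroup F T" "multiplicity T = F - n"
    using child_exchange[OF irr child] T_def by auto
  have n: "n \<in> S" "F < 2 * n" "n < F" using child by (auto simp: child_index_def)
  then have "S = exchange T (F - n) (F - (F - n))"
    using exchange_inverse[of n S F] partner_gap[OF irr] T_def by simp
  then have "(gap_vector F T, gap_vector F S) \<in> GK_edges F"
    using edge_iff[OF F T(1) irr] T(2) n by simp
  then show "(vmove (gap_vector F S) n (F - n), gap_vector F S) \<in> GK_edges F"
    using child_gap_vector[OF irr child] T_def by simp
qed

definition child_conditions :: "nat \<Rightarrow> (nat \<Rightarrow> int) \<Rightarrow> nat \<Rightarrow> bool" where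
  "child_conditions F x n \<longleftrightarrow> n \<in> {1..F} \<and>
     x n = 0 \<and>
     (\<forall>k j. 0 < k \<and> 0 < j \<and> k + j = n \<longrightarrow> x k + x j \<ge> 1) \<and>
     real F / 2 < real n \<and> n < F \<and>
     x (2 * n - F) = 1 \<and>
     3 * n \<noteq> 2 * F \<and>
     4 * n \<noteq> 3 * F \<and>
     int n > int F - int (mx F x)"

lemma child_conditions_iff:
  assumes irr: "irr_semigroup F S"
  defines "x \<equiv> gap_vector F S"
  shows "child_conditions F x n \<longleftrightarrow> child_index F S n"
proof (cases "F < 2 * n \<and> n < F")
  case True
  have above: "\<forall>i>F. i \<in> S" using irr by (simp add: irr_semigroup_def)
  have x: "x i = (if i \<in> S then 0 else 1)" if "1 \<le> i" "i \<le> F" for i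
    using that by (simp add: x_def gap_vector_def)
  have summands: "x k + x j \<ge> 1 \<longleftrightarrow> k \<notin> S \<or> j \<notin> S"
    if "0 < k" "0 < j" "k + j = n" for k j
    using x[of k] x[of j] that True by auto
  have reflected: "1 \<le> 2 * n - F" "2 * n - F \<le> F" using True by linarith+
  have "n \<in> {1..F}" "real F / 2 < real n" using True by auto
  moreover have "x n = 0 \<longleftrightarrow> n \<in> S" using x[of n] True by simp
  moreover have "(\<forall>k j. 0 < k \<and> 0 < j \<and> k + j = n \<longrightarrow> x k + x j \<ge> 1) \<longleftrightarrow>
      (\<forall>k j. 0 < k \<longrightarrow> 0 < j \<longrightarrow> k + j = n \<longrightarrow> k \<notin> S \<or> j \<notin> S)"
    using summands by blast
  moreover have "x (2 * n - F) = 1 \<longleftrightarrow> 2 * n - F \<notin> S"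
    using x[OF reflected] by simp
  moreover have "int n > int F - int (mx F x) \<longleftrightarrow> F - n < multiplicity S"
    using mx_gap_vector[OF above] True unfolding x_def by linarith
  ultimately show ?thesis using True by (simp add: child_conditions_def child_index_def)
qed (auto simp: child_conditions_def child_index_def)

theorem theorem15:
  fixes F :: nat
  assumes "0 < F"
  shows "is_tree_with_root (GK_vertices F) (GK_edges F) (xhat F) \<and>
    (\<forall>S\<in>Irr F. let x = kunz S (F + 1) in
       {v. (v, x) \<in> GK_edges F} =
       {vmove x n (F - n) | n. n \<in> {1..F} \<and>
          x n = 0 \<and>
          (\<forall>k j. 0 < k \<and> 0 < j \<and> k + j = n \<longrightarrow> x k + x j \<ge> 1) \<and>
          real F / 2 < real n \<and> n < F \<and>
          x (2 * n - F) = 1 \<and>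
          3 * n \<noteq> 2 * F \<and>
          4 * n \<noteq> 3 * F \<and>
          int n > int F - int (mx F x)})"
proof -
  have children: "{v. (v, kunz S (F + 1)) \<in> GK_edges F} =
      {vmove (kunz S (F + 1)) n (F - n) | n. child_conditions F (kunz S (F + 1)) n}"
    if "S \<in> Irr F" for S
  proof -
    have irr: "irr_semigroup F S" using that Irr_iff_irr_semigroup[OF assms] by simp
    then have kunz: "kunz S (F + 1) = gap_vector F S"
      using kunz_gap_vector by (simp add: irr_semigroup_def)
    show ?thesis unfolding kunz GK_children[OF assms irr] child_conditions_iff[OF irr] by (rule refl)
  qed
  show ?thesis
    unfolding child_conditions_def[symmetric] Let_def using GK_tree[OF assms] children by blast
qed

end
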